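(* Let $x\neq0$ with $r(x)\neq0$, let $p\neq0$, and let $S=[s^{(1)},\dots,s^{(k)}]\in\mathbb C^{n\times k}$ satisfy $p^{\mathrm H}r(x)\neq0$ and $S^{\mathrm H}r(x)=0$. Suppose $[x,\ p,\ S]$ has full column rank, and that $(\alpha_{\mathrm{opt}},b_{\mathrm{opt}})$ is a stationary point of the function $(\alpha,b)\mapsto\rho\big(x+\alpha(I-P_{x,\rho(x_{\mathrm{opt}}),\rho(x)})[p+Sb]\big)$, where $$s=p+Sb_{\mathrm{opt}},\quad d=\alpha_{\mathrm{opt}}(I-P_{x,\rho(x_{\mathrm{opt}}),\rho(x)})s,\quad x_{\mathrm{opt}}=x+d.$$ Write $r_{\mathrm{opt}}=r(x_{\mathrm{opt}})$ and $\check F:=\check F_{\rho(x_{\mathrm{opt}}),\rho(x)}(\rho(x_{\mathrm{opt}});x)$. Then, in the nontrivial case $x_{\mathrm{opt}}\neq x$, and provided $x^{\mathrm H}\Phi(\rho(x_{\mathrm{opt}}),\rho(x))x\neq0$ and $s^{\mathrm H}\check Fs\neq0$: $\alpha_{\mathrm{opt}}\neq0$, $r_{\mathrm{opt}}\perp\mathrm{span}\{x,p,S,s,d\}$, and $$\alpha_{\mathrm{opt}}=-\frac{p^{\mathrm H}r(x)}{s^{\mathrm H}\check Fs}=-\frac{d^{\mathrm H}F(\rho(x_{\mathrm{opt}}))d}{r(x)^{\mathrm H}p},$$ $$\rho(x_{\mathrm{opt}})-\rho(x)=\frac{|r(x)^{\mathrm H}p|^2}{[x^{\mathrm H}\Phi(\rho(x_{\mathrm{opt}}),\rho(x))x][s^{\mathrm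 H}\check Fs]}=\frac{d^{\mathrm H}F(\rho(x_{\mathrm{opt}}))d}{x^{\mathrm H}\Phi(\rho(x_{\mathrm{opt}}),\rho(x))x},$$ $$r(x_{\mathrm{opt}})-r(x)=\check Fd,$$ $$b_{\mathrm{opt}}=-\big[S^{\mathrm H}\check FS\big]^{\dagger}S^{\mathrm H}\check Fp+v,$$ where $v$ is a vector satisfying $\check FSv\perp\mathrm{span}\{x,p,S,s,d\}$ and $\dagger$ denotes the Moore–Penrose inverse. Moreover, the four displayed formulas also hold in the trivial case $\alpha_{\mathrm{opt}}=0$, $d=0$, $x_{\mathrm{opt}}=x$, $\rho(x_{\mathrm{opt}})=\rho(x)$, $r(x_{\mathrm{opt}})=r(x)$.
   Context: Setting: $F(\lambda)=\sum_{k=0}^m A_k\lambda^{m-k}$ with Hermitian $A_k\in\mathbb C^{n\times n}$; $\mathcal I=(\lambda_-,\lambda_+)$ with $F(\lambda_-)$ negative definite. For $x$ such that $x^{\mathrm H}F(\lambda)x=0$ has a root in $\mathcal I$, it is assumed $\sigma(x):=x^{\mathrm H}F'(\rho(x))x>0$, so the root is unique and denoted $\rho(x)$ (Rayleigh quotient); all vectors at which $\rho$ is evaluated are assumed to be of this type. Residual: $r(x)=F(\rho(x))x$ (so $x^{\mathrm H}r(x)=0$ and $r(x)=-\tfrac12\sigma(x)\nabla\rho(x)$). Divided difference: $\Phi(\rho_1,\rho_2)=\frac{F(\rho_1)-F(\rho_2)}{\rho_1-\rho_2}$. Oblique projection: $P_{x,\rho_1,\rho_2}=\frac{xx^{\mathrm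 H}\Phi(\rho_1,\rho_2)}{x^{\mathrm H}\Phi(\rho_1,\rho_2)x}$. Projected polynomial: $\check F_{\rho_1,\rho_2}(\rho;x)=(I-P_{x,\rho_1,\rho_2}^{\mathrm H})F(\rho)(I-P_{x,\rho_1,\rho_2})$. *)

theory Defs
  imports "HOL-Analysis.Analysis"
begin

text \<open>Complex vectors: complex^'n ; complex matrices: complex^'c^'r (r rows, c columns).\<close>

definition ctrans :: "complex^'c^'r \<Rightarrow> complex^'r^'c" where
  "ctrans M = (\<chi> i j. cnj (M $ j $ i))"

definition hermitian :: "complex^'n^'n \<Rightarrow> bool" where
  "hermitian M \<longleftrightarrow> ctrans M = M"

definition cinner :: "complex^'n \<Rightarrow> complex^'n \<Rightarrow> complex" where
  "cinner u v = (\<Sum>i\<in>UNIV. cnj (u $ i) * v $ i)"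

definition cscale_mat :: "complex \<Rightarrow> complex^'c^'r \<Rightarrow> complex^'c^'r" where
  "cscale_mat c M = (\<chi> i j. c * M $ i $ j)"

definition pinv :: "complex^'c^'r \<Rightarrow> complex^'r^'c" where
  "pinv M = (THE X. M ** X ** M = M \<and> X ** M ** X = X \<and>
                    ctrans (M ** X) = M ** X \<and> ctrans (X ** M) = X ** M)"

definition Fpoly :: "(nat \<Rightarrow> complex^'n^'n) \<Rightarrow> nat \<Rightarrow> real \<Rightarrow> complex^'n^'n" where
  "Fpoly A m l = (\<Sum>k\<in>{0..m}. (l ^ (m - k)) *\<^sub>R A k)"

definition Fderiv :: "(nat \<Rightarrow> complex^'n^'n) \<Rightarrow> nat \<Rightarrow> real \<Rightarrow> complex^'n^'n" where
  "Fderiv A m l = (\<Sum>k\<in>{0..m}. (real (m - k) * l ^ (m - k - 1)) *\<^sub>R A k)"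

definition Ival :: "real \<Rightarrow> ereal \<Rightarrow> real set" where
  "Ival lm lp = {l. lm < l \<and> ereal l < lp}"

text \<open>Vectors at which the Rayleigh functional is defined: x^H F(l) x = 0 has a root
  in I, and sigma(x) = x^H F'(rho(x)) x > 0 (imposed at every root in I, which
  makes the root unique).\<close>
definition admissible :: "(nat \<Rightarrow> complex^'n^'n) \<Rightarrow> nat \<Rightarrow> real \<Rightarrow> ereal \<Rightarrow> complex^'n \<Rightarrow> bool" where
  "admissible A m lm lp x \<longleftrightarrow>
     (\<exists>l\<in>Ival lm lp. cinner x (Fpoly A m l *v x) = 0) \<and>
     (\<forall>l\<in>Ival lm lp. cinner x (Fpoly A m l *v x) = 0 \<longrightarrow> Re (cinner x (Fderiv A m l *v x)) > 0)"

definition rho :: "(nat \<Rightarrow> complex^'n^'n) \<Rightarrow> nat \<Rightarrow> real \<Rightarrow> ereal \<Rightarrow> complex^'n \<Rightarrow> real" where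
  "rho A m lm lp x = (THE l. l \<in> Ival lm lp \<and> cinner x (Fpoly A m l *v x) = 0)"

definition resid :: "(nat \<Rightarrow> complex^'n^'n) \<Rightarrow> nat \<Rightarrow> real \<Rightarrow> ereal \<Rightarrow> complex^'n \<Rightarrow> complex^'n" where
  "resid A m lm lp x = Fpoly A m (rho A m lm lp x) *v x"

definition Phi :: "(nat \<Rightarrow> complex^'n^'n) \<Rightarrow> nat \<Rightarrow> real \<Rightarrow> real \<Rightarrow> complex^'n^'n" where
  "Phi A m r1 r2 = (if r1 = r2 then Fderiv A m r1
                    else (1 / (r1 - r2)) *\<^sub>R (Fpoly A m r1 - Fpoly A m r2))"

definition Pproj :: "(nat \<Rightarrow> complex^'n^'n) \<Rightarrow> nat \<Rightarrow> complex^'n \<Rightarrow> real \<Rightarrow> real \<Rightarrow> complex^'n^'n" where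
  "Pproj A m x r1 r2 =
     cscale_mat (1 / cinner x (Phi A m r1 r2 *v x))
       ((\<chi> i j. x $ i * cnj (x $ j)) ** Phi A m r1 r2)"

definition Fcheck :: "(nat \<Rightarrow> complex^'n^'n) \<Rightarrow> nat \<Rightarrow> real \<Rightarrow> real \<Rightarrow> real \<Rightarrow> complex^'n \<Rightarrow> complex^'n^'n" where
  "Fcheck A m r1 r2 l x =
     (mat 1 - ctrans (Pproj A m x r1 r2)) ** Fpoly A m l ** (mat 1 - Pproj A m x r1 r2)"

end

theory Submission
  imports Defs
begin

(* Stationarity of rho along the two-parameter family means that the derivative of
   y^H F(rho(y)) y = 0 along every curve through x_opt vanishes, i.e. r(x_opt) is orthogonal to the
   tangent directions (I - P)s and (I - P)Sw; together with x_opt^H r(x_opt) = 0 this makes r(x_opt)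
   orthogonal to the whole search space.  Everything else is algebra around the divided difference
   F(rho(x_opt)) = F(rho(x)) + (rho(x_opt) - rho(x)) Phi: the oblique projection I - P annihilates x
   and has range Phi-orthogonal to x, so r(x_opt) - r(x) = Fcheck d and
   d^H F(rho(x_opt)) d = (rho(x_opt) - rho(x)) x^H Phi x.  Testing r(x_opt) - r(x) against s and d
   gives the formulas for alpha and rho(x_opt) - rho(x); testing it against the columns of S gives the
   normal equations S^H Fcheck S b = - S^H Fcheck p, whose solutions are described by the
   Moore-Penrose inverse. *)

section \<open>Conjugate inner product and Hermitian matrices\<close>

lemma cinner_add_right: "cinner u (v + w) = cinner u v + cinner u w"
  by (simp add: cinner_def distrib_left sum.distrib)

lemma cinner_add_left: "cinner (u + v) w = cinner u w + cinner v w"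
  by (simp add: cinner_def distrib_right sum.distrib)

lemma cinner_diff_right: "cinner u (v - w) = cinner u v - cinner u w"
  by (simp add: cinner_def right_diff_distrib sum_subtractf)

lemma cinner_diff_left: "cinner (u - v) w = cinner u w - cinner v w"
  by (simp add: cinner_def left_diff_distrib sum_subtractf)

lemma cinner_minus_right: "cinner u (- v) = - cinner u v"
  by (simp add: cinner_def sum_negf)

lemma cinner_scale_right: "cinner u (c *s v) = c * cinner u v"
  by (simp add: cinner_def sum_distrib_left ac_simps)

lemma cinner_scale_left: "cinner (c *s u) v = cnj c * cinner u v"
  by (simp add: cinner_def sum_distrib_left ac_simps)

lemma cinner_scaleR_right: "cinner u (c *\<^sub>R v) = of_real c * cinner u v"
  by (simp add: cinner_def sum_distrib_left mult.left_commute flip: scaleR_conv_of_real)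

lemma cinner_zero_right [simp]: "cinner u 0 = 0"
  by (simp add: cinner_def)

lemma cinner_zero_left [simp]: "cinner 0 u = 0"
  by (simp add: cinner_def)

lemma cnj_cinner: "cnj (cinner u v) = cinner v u"
  by (simp add: cinner_def ac_simps)

lemma cinner_self_eq_0_iff: "cinner u u = 0 \<longleftrightarrow> u = 0"
proof
  assume "cinner u u = 0"
  moreover have "cinner u u = of_real (\<Sum>i\<in>UNIV. (cmod (u $ i))\<^sup>2)"
    by (simp add: cinner_def complex_norm_square mult.commute del: of_real_power)
  ultimately have "(\<Sum>i\<in>UNIV. (cmod (u $ i))\<^sup>2) = 0"
    by (metis of_real_eq_0_iff)
  then show "u = 0"
    by (simp add: sum_nonneg_eq_0_iff vec_eq_iff)
qed simp

lemma ctrans_ctrans [simp]: "ctrans (ctrans M) = M"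
  by (simp add: ctrans_def vec_eq_iff)

lemma ctrans_mult: "ctrans (M ** N) = ctrans N ** ctrans M"
  by (simp add: ctrans_def matrix_matrix_mult_def vec_eq_iff ac_simps)

lemma ctrans_add: "ctrans (M + N) = ctrans M + ctrans N"
  by (simp add: ctrans_def vec_eq_iff)

lemma ctrans_diff: "ctrans (M - N) = ctrans M - ctrans N"
  by (simp add: ctrans_def vec_eq_iff)

lemma ctrans_zero [simp]: "ctrans 0 = 0"
  by (simp add: ctrans_def vec_eq_iff)

lemma ctrans_mat_1 [simp]: "ctrans (mat 1) = mat 1"
  by (simp add: ctrans_def vec_eq_iff mat_def)

lemma ctrans_scaleR: "ctrans (c *\<^sub>R M) = c *\<^sub>R ctrans M"
  by (simp add: ctrans_def vec_eq_iff)

lemma ctrans_sum: "ctrans (sum f K) = (\<Sum>k\<in>K. ctrans (f k))"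
  by (induct K rule: infinite_finite_induct) (auto simp: ctrans_add)

lemma cinner_mult_right: "cinner u (M *v v) = cinner (ctrans M *v u) v"
proof -
  have "cinner u (M *v v) = (\<Sum>i\<in>UNIV. \<Sum>j\<in>UNIV. cnj (u $ i) * M $ i $ j * v $ j)"
    by (simp add: cinner_def matrix_vector_mult_def sum_distrib_left mult.assoc)
  also have "\<dots> = (\<Sum>j\<in>UNIV. \<Sum>i\<in>UNIV. cnj (u $ i) * M $ i $ j * v $ j)"
    by (rule sum.swap)
  also have "\<dots> = cinner (ctrans M *v u) v"
    by (simp add: cinner_def ctrans_def matrix_vector_mult_def sum_distrib_right) (simp add: mult_ac)
  finally show ?thesis .
qed

lemma cinner_mult_left: "cinner (M *v u) v = cinner u (ctrans M *v v)"
  using cinner_mult_right[of u "ctrans M" v] by simp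

lemma vec_eq_iff_cinner: "v = w \<longleftrightarrow> (\<forall>u. cinner u v = cinner u w)"
  by (metis cinner_diff_right cinner_self_eq_0_iff eq_iff_diff_eq_0)

lemma cinner_span_eq_0:
  assumes "y \<in> vec.span B" and "\<And>z. z \<in> B \<Longrightarrow> cinner z w = 0"
  shows "cinner y w = 0"
  using assms(1)
proof (induct rule: vec.span_induct_alt)
  case (step c z y)
  then show ?case
    using assms(2) by (simp add: cinner_add_left cinner_scale_left)
qed simp

lemma column_eq_mult_axis: "column j S = S *v axis j 1"
  by (simp add: vec_eq_iff column_def matrix_vector_mult_def axis_def if_distrib cong: if_cong)

lemma cinner_column: "cinner (column j S) v = (ctrans S *v v) $ j"
  by (simp add: cinner_def column_def ctrans_def matrix_vector_mult_def)

lemma matrix_vector_mult_minus_right: "(M::complex^'n^'m) *v (- v) = - (M *v v)"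
  by (simp add: vec_eq_iff matrix_vector_mult_def sum_negf)

lemma matrix_vector_mult_scale: "(M::complex^'n^'m) *v (c *s v) = c *s (M *v v)"
  by (simp add: vec_eq_iff matrix_vector_mult_def sum_distrib_left mult.left_commute)

lemma sum_matrix_vector_mult: "sum f K *v v = (\<Sum>k\<in>K. f k *v v)"
  by (induct K rule: infinite_finite_induct) (auto simp: matrix_vector_mult_add_rdistrib)

lemma scaleR_matrix_vector_mult: "(c *\<^sub>R (M::complex^'n^'m)) *v v = c *\<^sub>R (M *v v)"
  by (simp add: vec_eq_iff matrix_vector_mult_def scaleR_sum_right)

lemma cscale_mat_mult_vector: "cscale_mat c M *v v = c *s (M *v v)"
  by (simp add: cscale_mat_def vec_eq_iff matrix_vector_mult_def sum_distrib_left ac_simps)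

lemma outer_mult_vector: "(\<chi> i j. x $ i * cnj (y $ j)) *v v = cinner y v *s x"
  by (simp add: vec_eq_iff matrix_vector_mult_def cinner_def sum_distrib_left ac_simps)

lemma scaleR_eq_scale: "c *\<^sub>R (v::complex^'n) = complex_of_real c *s v"
  by (simp add: vec_eq_iff) (simp add: scaleR_conv_of_real)

lemma hermitian_diff: "hermitian M \<Longrightarrow> hermitian N \<Longrightarrow> hermitian (M - N)"
  by (simp add: hermitian_def ctrans_diff)

lemma hermitian_scaleR: "hermitian M \<Longrightarrow> hermitian (c *\<^sub>R M)"
  by (simp add: hermitian_def ctrans_scaleR)

lemma hermitian_sum: "(\<And>k. k \<in> K \<Longrightarrow> hermitian (f k)) \<Longrightarrow> hermitian (sum f K)"
  by (simp add: hermitian_def ctrans_sum)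

lemma hermitian_congruence: "hermitian M \<Longrightarrow> hermitian (ctrans N ** M ** N)"
  by (simp add: hermitian_def ctrans_mult matrix_mul_assoc)

lemma hermitian_cinner_swap: "hermitian M \<Longrightarrow> cinner u (M *v v) = cinner (M *v u) v"
  using cinner_mult_right[of u M v] by (simp add: hermitian_def)

lemma hermitian_cnj_cinner_swap: "hermitian M \<Longrightarrow> cnj (cinner u (M *v v)) = cinner v (M *v u)"
  by (simp add: cnj_cinner hermitian_cinner_swap)

lemma hermitian_cinner_self_real: "hermitian M \<Longrightarrow> cnj (cinner u (M *v u)) = cinner u (M *v u)"
  by (rule hermitian_cnj_cinner_swap)

section \<open>The matrix polynomial and the Rayleigh functional\<close>

lemma Fpoly_mult_vector: "Fpoly A m l *v y = (\<Sum>k\<in>{0..m}. l ^ (m - k) *\<^sub>R (A k *v y))"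
  by (simp add: Fpoly_def sum_matrix_vector_mult scaleR_matrix_vector_mult)

lemma Fderiv_mult_vector:
  "Fderiv A m l *v y = (\<Sum>k\<in>{0..m}. (real (m - k) * l ^ (m - k - 1)) *\<^sub>R (A k *v y))"
  by (simp add: Fderiv_def sum_matrix_vector_mult scaleR_matrix_vector_mult)

lemma hermitian_Fpoly: "(\<And>j. j \<le> m \<Longrightarrow> hermitian (A j)) \<Longrightarrow> hermitian (Fpoly A m l)"
  unfolding Fpoly_def by (intro hermitian_sum hermitian_scaleR) auto

lemma hermitian_Fderiv: "(\<And>j. j \<le> m \<Longrightarrow> hermitian (A j)) \<Longrightarrow> hermitian (Fderiv A m l)"
  unfolding Fderiv_def by (intro hermitian_sum hermitian_scaleR) auto

lemma hermitian_Phi: "(\<And>j. j \<le> m \<Longrightarrow> hermitian (A j)) \<Longrightarrow> hermitian (Phi A m r1 r2)"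
  unfolding Phi_def by (auto intro!: hermitian_scaleR hermitian_diff hermitian_Fpoly hermitian_Fderiv)

lemma Fpoly_divided_difference: "Fpoly A m r1 = Fpoly A m r2 + (r1 - r2) *\<^sub>R Phi A m r1 r2"
  by (simp add: Phi_def)

lemma has_vector_derivative_cinner:
  fixes f g :: "real \<Rightarrow> complex^'n"
  assumes f: "(f has_vector_derivative f') (at t within T)"
    and g: "(g has_vector_derivative g') (at t within T)"
  shows "((\<lambda>t. cinner (f t) (g t)) has_vector_derivative cinner (f t) g' + cinner f' (g t))
           (at t within T)"
proof -
  have f_i: "((\<lambda>t. f t $ i) has_vector_derivative f' $ i) (at t within T)"
    and g_i: "((\<lambda>t. g t $ i) has_vector_derivative g' $ i) (at t within T)" for i
    using f g by (auto intro: bounded_linear.has_vector_derivative[OF bounded_linear_vec_nth])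
  show ?thesis
    unfolding cinner_def by (auto intro!: derivative_eq_intros f_i g_i simp: sum.distrib)
qed

lemma has_vector_derivative_Fpoly_mult_vector:
  assumes g: "(g has_real_derivative g') (at t within T)"
    and y: "(y has_vector_derivative u) (at t within T)"
  shows "((\<lambda>t. Fpoly A m (g t) *v y t) has_vector_derivative
           Fpoly A m (g t) *v u + g' *\<^sub>R (Fderiv A m (g t) *v y t)) (at t within T)"
proof -
  have "((\<lambda>t. g t ^ (m - k)) has_real_derivative g' * (real (m - k) * g t ^ (m - k - 1)))
      (at t within T)" for k
    using DERIV_power[OF g, of "m - k"] by (simp add: mult_ac)
  moreover have "((\<lambda>t. A k *v y t) has_vector_derivative A k *v u) (at t within T)" for k
    using y by (rule bounded_linear.has_vector_derivative[OF matrix_vector_mul_bounded_linear])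
  ultimately have "((\<lambda>t. \<Sum>k\<in>{0..m}. g t ^ (m - k) *\<^sub>R (A k *v y t)) has_vector_derivative
      (\<Sum>k\<in>{0..m}. g t ^ (m - k) *\<^sub>R (A k *v u)
         + (g' * (real (m - k) * g t ^ (m - k - 1))) *\<^sub>R (A k *v y t))) (at t within T)"
    by (intro has_vector_derivative_sum has_vector_derivative_scaleR)
  then show ?thesis
    by (simp add: Fpoly_mult_vector Fderiv_mult_vector sum.distrib scaleR_sum_right)
qed

lemma no_two_zeros_if_deriv_pos_at_zeros:
  fixes f f' :: "real \<Rightarrow> real"
  assumes der: "\<And>l. (f has_real_derivative f' l) (at l)"
    and pos: "\<And>l. l \<in> {a..b} \<Longrightarrow> f l = 0 \<Longrightarrow> f' l > 0"
    and ab: "a < b" and fa: "f a = 0" and fb: "f b = 0"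
  shows False
proof -
  have cont: "isCont f l" for l
    using der DERIV_isCont by blast
  obtain d where d: "d > 0" "\<And>h. h > 0 \<Longrightarrow> h < d \<Longrightarrow> f (b - h) < f b"
    using DERIV_pos_inc_left[OF der pos[of b]] ab fb by auto
  define h where "h = min (d / 2) ((b - a) / 2)"
  have "0 < h" "h < d" "h < b - a"
    using d ab by (auto simp: h_def min_def)
  define c where "c = b - h"
  have c: "a < c" "c < b" "f c < 0"
    using d(2)[of h] \<open>0 < h\<close> \<open>h < d\<close> \<open>h < b - a\<close> fb by (auto simp: c_def)
  define K where "K = {a..c} \<inter> {l. f l = 0}"
  have "closed {l. f l = 0}"
    using cont by (intro closed_Collect_eq) (auto intro: continuous_at_imp_continuous_on)
  then have "compact K"
    unfolding K_def by (intro compact_Int_closed) auto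
  moreover have "a \<in> K"
    using c fa by (auto simp: K_def)
  ultimately obtain z where z: "z \<in> K" "\<And>z'. z' \<in> K \<Longrightarrow> z' \<le> z"
    using compact_attains_sup[of K] by blast
  \<comment> \<open>the largest zero left of \<open>c\<close> is a zero where \<open>f\<close> increases, forcing another zero in \<open>(z, c)\<close>\<close>
  have "f z = 0" "a \<le> z" "z \<le> c"
    using z(1) by (auto simp: K_def)
  with c(3) have z_c: "f z = 0" "a \<le> z" "z < c"
    by (auto simp: order.order_iff_strict)
  then obtain e where e: "e > 0" "\<And>h. h > 0 \<Longrightarrow> h < e \<Longrightarrow> f z < f (z + h)"
    using DERIV_pos_inc_right[OF der pos[of z]] c by auto
  define h' where "h' = min (e / 2) ((c - z) / 2)"
  have "0 < h'" "h' < e" "h' < c - z"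
    using e z_c by (auto simp: h'_def min_def)
  define q where "q = z + h'"
  have q: "z < q" "q < c" "f q > 0"
    using e(2)[of h'] \<open>0 < h'\<close> \<open>h' < e\<close> \<open>h' < c - z\<close> z_c by (auto simp: q_def)
  obtain z' where "q \<le> z'" "z' \<le> c" "f z' = 0"
    using IVT2[of f c 0 q] c q cont by (meson less_imp_le)
  then show False
    using z(2)[of z'] q z_c by (auto simp: K_def)
qed

lemma resid_orth_self:
  assumes herm: "\<And>j. j \<le> m \<Longrightarrow> hermitian (A j)" and adm: "admissible A m lm lp y"
  shows "cinner y (resid A m lm lp y) = 0"
proof -
  let ?q = "\<lambda>l. Re (cinner y (Fpoly A m l *v y))"
  have q_zero_iff: "?q l = 0 \<longleftrightarrow> cinner y (Fpoly A m l *v y) = 0" for l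
    using hermitian_cinner_self_real[OF hermitian_Fpoly[OF herm], where u = y] by (simp add: complex_eq_iff)
  have "((\<lambda>l. cinner y (Fpoly A m l *v y)) has_vector_derivative cinner y (Fderiv A m l *v y)) (at l)" for l
    using has_vector_derivative_cinner[OF has_vector_derivative_const
        has_vector_derivative_Fpoly_mult_vector[OF DERIV_ident has_vector_derivative_const]]
    by simp
  then have q_deriv: "(?q has_real_derivative Re (cinner y (Fderiv A m l *v y))) (at l)" for l
    unfolding has_real_derivative_iff_has_vector_derivative
    by (rule bounded_linear.has_vector_derivative[OF bounded_linear_Re])
  have no_two_roots: False
    if "l1 \<in> Ival lm lp" "l2 \<in> Ival lm lp" "l1 < l2" "?q l1 = 0" "?q l2 = 0" for l1 l2
  proof (rule no_two_zeros_if_deriv_pos_at_zeros[OF q_deriv _ that(3-5)])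
    fix l assume l: "l \<in> {l1..l2}" "?q l = 0"
    then have "l \<in> Ival lm lp"
      using that by (auto simp: Ival_def) (meson ereal_less_eq(3) order.strict_trans1)
    then show "Re (cinner y (Fderiv A m l *v y)) > 0"
      using adm l q_zero_iff[of l] by (auto simp: admissible_def)
  qed
  obtain l where l: "l \<in> Ival lm lp" "cinner y (Fpoly A m l *v y) = 0"
    using adm by (auto simp: admissible_def)
  have "\<exists>!l. l \<in> Ival lm lp \<and> cinner y (Fpoly A m l *v y) = 0"
  proof (rule ex1I[of _ l])
    fix l' assume l': "l' \<in> Ival lm lp \<and> cinner y (Fpoly A m l' *v y) = 0"
    show "l' = l"
    proof (rule ccontr)
      assume "l' \<noteq> l"
      then consider "l < l'" | "l' < l"
        by linarith
      then show False
        using no_two_roots[of l l'] no_two_roots[of l' l] l l' q_zero_iff[of l] q_zero_iff[of l']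
        by cases auto
    qed
  qed (use l in simp)
  then have "cinner y (Fpoly A m (rho A m lm lp y) *v y) = 0"
    unfolding rho_def by (rule theI'[THEN conjunct2])
  then show ?thesis
    by (simp add: resid_def)
qed

lemma resid_orth_tangent_of_stationary_curve:
  fixes y :: "real \<Rightarrow> complex^'n"
  assumes herm: "\<And>j. j \<le> m \<Longrightarrow> hermitian (A j)"
    and adm: "\<forall>\<^sub>F t in nhds 0. admissible A m lm lp (y t)"
    and y: "(y has_vector_derivative u) (at 0)"
    and rho_y: "((\<lambda>t. rho A m lm lp (y t)) has_real_derivative 0) (at 0)"
  shows "Re (cinner u (resid A m lm lp (y 0))) = 0"
proof -
  define F where "F = Fpoly A m (rho A m lm lp (y 0))"
  define h where "h t = cinner (y t) (Fpoly A m (rho A m lm lp (y t)) *v y t)" for t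
  have "(h has_vector_derivative cinner (y 0) (F *v u) + cinner u (F *v y 0)) (at 0)"
    unfolding h_def F_def
    using has_vector_derivative_cinner[OF y has_vector_derivative_Fpoly_mult_vector[OF rho_y y]]
    by simp
  moreover have "\<forall>\<^sub>F t in nhds 0. h t = 0"
    using adm by eventually_elim (simp add: h_def resid_orth_self[OF herm, unfolded resid_def])
  then have "(h has_vector_derivative D) (at 0) \<longleftrightarrow> ((\<lambda>_. 0) has_vector_derivative D) (at 0)" for D
    by (intro has_vector_derivative_cong_ev) (auto elim: eventually_mono dest: eventually_nhds_x_imp_x)
  ultimately have "cinner (y 0) (F *v u) + cinner u (F *v y 0) = 0"
    using vector_derivative_unique_at has_vector_derivative_const by blast
  moreover have "cinner (y 0) (F *v u) = cnj (cinner u (F *v y 0))"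
    unfolding F_def by (simp add: hermitian_cnj_cinner_swap[OF hermitian_Fpoly[OF herm]])
  ultimately show ?thesis
    by (simp add: resid_def F_def complex_eq_iff)
qed

lemma resid_orth_directions_of_stationary_point:
  fixes Q :: "complex^'n^'n" and S :: "complex^'k^'n"
  assumes herm: "\<And>j. j \<le> m \<Longrightarrow> hermitian (A j)"
    and adm: "\<forall>\<^sub>F (a, b) in nhds (a0, b0). admissible A m lm lp (x + a *s (Q *v (p + S *v b)))"
    and stat: "((\<lambda>(a, b). rho A m lm lp (x + a *s (Q *v (p + S *v b)))) has_derivative (\<lambda>_. 0))
                 (at (a0, b0))"
  shows "Re (cinner (c *s (Q *v (p + S *v b0)) + a0 *s (Q *v (S *v w)))
                    (resid A m lm lp (x + a0 *s (Q *v (p + S *v b0))))) = 0"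
proof -
  define Y where "Y = (\<lambda>(a, b). x + a *s (Q *v (p + S *v b)))"
  define L where "L t = (a0 + t *\<^sub>R c, b0 + t *\<^sub>R w)" for t :: real
  define u where "u = c *s (Q *v (p + S *v b0)) + a0 *s (Q *v (S *v w))"
  have YL: "Y (L t) = Y (a0, b0) + t *\<^sub>R u + t\<^sup>2 *\<^sub>R (c *s (Q *v (S *v w)))" for t
  proof -
    have line: "Q *v (p + S *v (b0 + t *\<^sub>R w)) = Q *v (p + S *v b0) + t *\<^sub>R (Q *v (S *v w))"
      by (simp add: matrix_vector_right_distrib scaleR_eq_scale matrix_vector_mult_scale)
    have parabola: "(a0 + t *\<^sub>R c) *s (V + t *\<^sub>R W)
        = a0 *s V + t *\<^sub>R (c *s V + a0 *s W) + t\<^sup>2 *\<^sub>R (c *s W)" for V W :: "complex^'n"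
      by (simp add: vec_eq_iff) (simp add: scaleR_conv_of_real algebra_simps power2_eq_square)
    show ?thesis
      unfolding Y_def L_def case_prod_conv line parabola u_def by (simp add: add.assoc)
  qed
  have L: "(L has_derivative (\<lambda>t. (t *\<^sub>R c, t *\<^sub>R w))) (at 0)" "L 0 = (a0, b0)"
    unfolding L_def by (auto intro!: derivative_eq_intros)
  have adm_line: "\<forall>\<^sub>F t in nhds 0. admissible A m lm lp (Y (L t))"
  proof -
    have "(L \<longlongrightarrow> (a0, b0)) (nhds 0)"
      using has_derivative_continuous[OF L(1)] tendsto_at_iff_tendsto_nhds[of L 0] L(2)
      by (simp add: continuous_at)
    from filterlim_iff[THEN iffD1, OF this, rule_format, OF adm] show ?thesis
      by (simp add: Y_def case_prod_unfold)
  qed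
  have Y_line: "((\<lambda>t. Y (L t)) has_vector_derivative u) (at 0)"
    unfolding YL by (auto intro!: derivative_eq_intros)
  have rho_line: "((\<lambda>t. rho A m lm lp (Y (L t))) has_real_derivative 0) (at 0)"
    using has_derivative_compose[OF L(1) stat[folded Y_def, folded L(2)]]
    by (simp add: has_field_derivative_def o_def lambda_zero Y_def case_prod_unfold)
  from resid_orth_tangent_of_stationary_curve[where A = A and m = m, OF herm adm_line Y_line rho_line]
  show ?thesis
    by (simp add: u_def Y_def L(2))
qed

section \<open>Moore--Penrose inverse of a Hermitian matrix\<close>

lemma orthogonal_projector_onto_span:
  fixes C :: "(complex^'n) set"
  assumes "finite C"
  shows "\<exists>E::complex^'n^'n. hermitian E \<and> E ** E = E \<and> (\<forall>c\<in>C. E *v c = c)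
           \<and> (\<forall>v. E *v v \<in> vec.span C)"
  using assms
proof (induct C rule: finite_induct)
  case empty
  show ?case
    by (intro exI[of _ 0]) (simp add: hermitian_def vec.span_zero)
next
  case (insert a C)
  then obtain E :: "complex^'n^'n" where E: "hermitian E" "E ** E = E" "\<And>c. c \<in> C \<Longrightarrow> E *v c = c"
    "\<And>v. E *v v \<in> vec.span C"
    by blast
  have EE: "E *v (E *v v) = E *v v" for v
    using E(2) by (simp add: matrix_vector_mul_assoc)
  have span_mono: "vec.span C \<subseteq> vec.span (insert a C)"
    by (rule vec.span_mono) auto
  \<comment> \<open>one Gram--Schmidt step: add the projector onto the component of \<open>a\<close> orthogonal to \<open>span C\<close>\<close>
  define a' where "a' = a - E *v a"
  show ?case
  proof (cases "a' = 0")
    case True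
    then have "E *v a = a"
      by (simp add: a'_def)
    then show ?thesis
      using E span_mono by blast
  next
    case False
    define n where "n = cinner a' a'"
    have n: "n \<noteq> 0" "cnj n = n"
      using False by (simp_all add: n_def cinner_self_eq_0_iff cnj_cinner)
    have a'_orth: "cinner a' (E *v v) = 0" for v
      using E(1) by (simp add: hermitian_cinner_swap a'_def matrix_vector_mult_diff_distrib EE)
    define E' where "E' = E + cscale_mat (1 / n) (\<chi> i j. a' $ i * cnj (a' $ j))"
    have E'v: "E' *v v = E *v v + (cinner a' v / n) *s a'" for v
      by (simp add: E'_def matrix_vector_mult_add_rdistrib cscale_mat_mult_vector outer_mult_vector)
    have "hermitian E'"
      using E(1) n(2) by (simp add: E'_def hermitian_def ctrans_add ctrans_def cscale_mat_def vec_eq_iff mult.commute)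
    moreover have "E' ** E' = E'"
      unfolding matrix_eq
    proof
      fix v
      have "E *v a' = 0"
        by (simp add: a'_def matrix_vector_mult_diff_distrib EE)
      then show "(E' ** E') *v v = E' *v v"
        unfolding matrix_vector_mul_assoc[symmetric] E'v
        by (simp add: matrix_vector_right_distrib matrix_vector_mult_scale EE cinner_add_right
            a'_orth cinner_scale_right n(1) flip: n_def)
    qed
    moreover have "E' *v c = c" if "c \<in> insert a C" for c
    proof (cases "c = a")
      case True
      have "cinner a' a = n"
        using a'_orth[of a] by (simp add: n_def a'_def cinner_diff_right)
      then show ?thesis
        using True n(1) by (simp add: E'v a'_def)
    next
      case False
      then have "E *v c = c"
        using that E(3) by simp
      moreover have "cinner a' c = 0"
        using a'_orth[of c] \<open>E *v c = c\<close> by simp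
      ultimately show ?thesis
        by (simp add: E'v)
    qed
    moreover have "E' *v v \<in> vec.span (insert a C)" for v
    proof -
      have "a' \<in> vec.span (insert a C)"
        unfolding a'_def using E(4)[of a] span_mono
        by (intro vec.span_diff) (auto intro: vec.span_base)
      then show ?thesis
        unfolding E'v using E(4)[of v] span_mono by (intro vec.span_add vec.span_scale) auto
    qed
    ultimately show ?thesis
      by blast
  qed
qed

definition penrose_inverse :: "complex^'c^'r \<Rightarrow> complex^'r^'c \<Rightarrow> bool" where
  "penrose_inverse M X \<longleftrightarrow> M ** X ** M = M \<and> X ** M ** X = X \<and> ctrans (M ** X) = M ** X \<and> ctrans (X ** M) = X ** M"

lemma penrose_inverse_unique:
  assumes "penrose_inverse M X" and "penrose_inverse M Y"
  shows "X = Y"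
proof -
  have X: "M ** X ** M = M" "X ** M ** X = X" "ctrans (M ** X) = M ** X" "ctrans (X ** M) = X ** M"
    and Y: "M ** Y ** M = M" "Y ** M ** Y = Y" "ctrans (M ** Y) = M ** Y" "ctrans (Y ** M) = Y ** M"
    using assms by (simp_all add: penrose_inverse_def)
  have MX: "M ** X = ctrans X ** ctrans M" and XM: "X ** M = ctrans M ** ctrans X"
    using X(3,4) by (simp_all add: ctrans_mult)
  have MY: "M ** Y = ctrans Y ** ctrans M" and YM: "Y ** M = ctrans M ** ctrans Y"
    using Y(3,4) by (simp_all add: ctrans_mult)
  have cM_X: "ctrans M = ctrans M ** ctrans X ** ctrans M"
    and cM_Y: "ctrans M = ctrans M ** ctrans Y ** ctrans M"
    using arg_cong[OF X(1), of ctrans] arg_cong[OF Y(1), of ctrans]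
    by (simp_all add: ctrans_mult matrix_mul_assoc)
  have "X = X ** (M ** X)"
    using X(2) by (simp add: matrix_mul_assoc)
  also have "\<dots> = X ** ctrans X ** (ctrans M ** ctrans Y ** ctrans M)"
    using cM_Y by (simp add: MX matrix_mul_assoc)
  also have "\<dots> = X ** (ctrans X ** ctrans M) ** (ctrans Y ** ctrans M)"
    by (simp add: matrix_mul_assoc)
  also have "\<dots> = (X ** M ** X) ** M ** Y"
    by (simp only: MX[symmetric] MY[symmetric] matrix_mul_assoc)
  finally have X_eq: "X = X ** M ** Y"
    using X(2) by simp
  have "Y = (Y ** M) ** Y"
    using Y(2) by (simp add: matrix_mul_assoc)
  also have "\<dots> = (ctrans M ** ctrans X ** ctrans M) ** ctrans Y ** Y"
    using cM_X by (simp add: YM)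
  also have "\<dots> = (ctrans M ** ctrans X) ** (ctrans M ** ctrans Y) ** Y"
    by (simp add: matrix_mul_assoc)
  also have "\<dots> = X ** M ** (Y ** M ** Y)"
    by (simp only: XM[symmetric] YM[symmetric] matrix_mul_assoc)
  finally show ?thesis
    using X_eq Y(2) by simp
qed

lemma penrose_inverse_from_range_projector:
  fixes M E T T' :: "complex^'k^'k"
  assumes E: "hermitian E" "E ** E = E" "E ** M = M" "M ** E = M"
    and T: "T = M + mat 1 - E" "T ** T' = mat 1" "T' ** T = mat 1"
  shows "penrose_inverse M (T' ** E)"
proof -
  have "E *v (E *v v) = E *v v" "E *v (M *v v) = M *v v" "M *v (E *v v) = M *v v" for v
    using E(2-4) by (simp_all add: matrix_vector_mul_assoc)
  then have ET: "E ** T = M" and TE: "T ** E = M"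
    unfolding matrix_eq T(1)
    by (simp_all add: algebra_simps flip: matrix_vector_mul_assoc)
  have comm: "T' ** E = E ** T'"
  proof -
    have "T' ** E = T' ** (E ** T) ** T'"
      by (simp add: matrix_mul_assoc[symmetric] T(2))
    also have "\<dots> = E ** T'"
      by (simp add: ET TE[symmetric] matrix_mul_assoc T(3))
    finally show ?thesis .
  qed
  define X where "X = T' ** E"
  have MX: "M ** X = E"
  proof -
    have "M ** X = T ** ((E ** T') ** E)"
      by (simp only: X_def TE[symmetric] matrix_mul_assoc)
    also have "\<dots> = (T ** T') ** (E ** E)"
      by (simp only: comm[symmetric] matrix_mul_assoc)
    finally show ?thesis
      by (simp add: T(2) E(2))
  qed
  have XM: "X ** M = E"
  proof -
    have "X ** M = T' ** ((E ** E) ** T)"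
      by (simp only: X_def ET[symmetric] matrix_mul_assoc)
    also have "\<dots> = T' ** (T ** E)"
      by (simp only: E(2) ET TE)
    finally show ?thesis
      by (simp add: matrix_mul_assoc T(3))
  qed
  have X_alt: "X = E ** T'"
    using comm by (simp add: X_def)
  have "X ** M ** X = X"
    by (simp add: XM) (simp add: X_alt matrix_mul_assoc E(2))
  then show ?thesis
    using E(1,3) by (simp add: penrose_inverse_def MX XM hermitian_def flip: X_def)
qed

lemma hermitian_penrose_inverse_exists:
  fixes M :: "complex^'k^'k"
  assumes M: "hermitian M"
  shows "\<exists>X. penrose_inverse M X"
proof -
  obtain E :: "complex^'k^'k" where E: "hermitian E" "E ** E = E"
      "\<And>j. E *v column j M = column j M" "\<And>v. E *v v \<in> vec.span (range (\<lambda>j. column j M))"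
    using orthogonal_projector_onto_span[of "range (\<lambda>j. column j M)"] by auto
  have EM: "E ** M = M"
    using E(3) by (simp add: vec_eq_iff column_def matrix_vector_mult_def matrix_matrix_mult_def)
  have "ctrans (E ** M) = ctrans M"
    using EM by simp
  then have ME: "M ** E = M"
    using E(1) M by (simp add: ctrans_mult hermitian_def)
  have EEv: "E *v (E *v v) = E *v v" and EMv: "E *v (M *v v) = M *v v" for v
    using E(2) EM by (simp_all add: matrix_vector_mul_assoc)
  define T where "T = M + mat 1 - E"
  \<comment> \<open>\<open>T\<close> agrees with \<open>M\<close> on the range of \<open>M\<close> (that of \<open>E\<close>) and with the identity on its orthogonal
    complement; so it is invertible, and \<open>T\<inverse> E\<close> is the Moore--Penrose inverse of \<open>M\<close>\<close>
  have "inj ((*v) T)"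
  proof (rule injI)
    fix z1 z2 assume "T *v z1 = T *v z2"
    then have Tz: "T *v (z1 - z2) = 0"
      by (simp add: matrix_vector_mult_diff_distrib)
    have "M *v (z1 - z2) = E *v (T *v (z1 - z2))"
      by (simp add: T_def algebra_simps EEv EMv)
    then have Mz: "M *v (z1 - z2) = 0"
      using Tz by simp
    then have "z1 - z2 = E *v (z1 - z2)"
      using Tz by (simp add: T_def matrix_vector_mult_diff_rdistrib matrix_vector_mult_add_rdistrib)
    then have "z1 - z2 \<in> vec.span (range (\<lambda>j. column j M))"
      by (metis E(4))
    then have "cinner (z1 - z2) (z1 - z2) = 0"
      by (rule cinner_span_eq_0) (use M Mz in \<open>auto simp: cinner_column hermitian_def\<close>)
    then show "z1 = z2"
      by (simp add: cinner_self_eq_0_iff)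
  qed
  then have "bij ((*v) T)"
    using vec.linear_inj_imp_surj[OF matrix_vector_mul_linear_gen] by (simp add: bij_def)
  then obtain T' where "T ** T' = mat 1" "T' ** T = mat 1"
    using invertible_eq_bij[of T] unfolding invertible_def by blast
  then show ?thesis
    using penrose_inverse_from_range_projector[OF E(1,2) EM ME T_def] by blast
qed

lemma hermitian_mult_pinv_mult:
  fixes M :: "complex^'k^'k"
  assumes "hermitian M"
  shows "M ** pinv M ** M = M"
proof -
  have "\<exists>!X. penrose_inverse M X"
    using hermitian_penrose_inverse_exists[OF assms] penrose_inverse_unique by blast
  then have "penrose_inverse M (pinv M)"
    unfolding pinv_def penrose_inverse_def[abs_def] by (rule theI')
  then show ?thesis
    by (simp add: penrose_inverse_def)
qed

lemma hermitian_pinv_kernel: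
  fixes M :: "complex^'k^'k"
  assumes "hermitian M"
  shows "M *v (b - pinv M *v (M *v b)) = 0"
  using hermitian_mult_pinv_mult[OF assms]
  by (simp add: matrix_vector_mult_diff_distrib matrix_vector_mul_assoc matrix_mul_assoc)

section \<open>Oblique projection\<close>

definition oproj :: "complex^'n \<Rightarrow> complex^'n^'n \<Rightarrow> complex^'n^'n" where
  "oproj x H = cscale_mat (1 / cinner x (H *v x)) ((\<chi> i j. x $ i * cnj (x $ j)) ** H)"

lemma Pproj_eq_oproj: "Pproj A m x r1 r2 = oproj x (Phi A m r1 r2)"
  by (simp add: Pproj_def oproj_def)

lemma Fcheck_eq_oproj:
  "Fcheck A m r1 r2 l x
     = ctrans (mat 1 - oproj x (Phi A m r1 r2)) ** Fpoly A m l ** (mat 1 - oproj x (Phi A m r1 r2))"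
  by (simp add: Fcheck_def Pproj_eq_oproj ctrans_diff)

lemma oproj_mult_vector: "oproj x H *v v = (cinner x (H *v v) / cinner x (H *v x)) *s x"
  by (simp add: oproj_def cscale_mat_mult_vector outer_mult_vector vector_smult_assoc
      flip: matrix_vector_mul_assoc)

locale oblique_projection =
  fixes x :: "complex^'n" and H :: "complex^'n^'n"
  assumes hermitian_H: "hermitian H" and xHx_nz: "cinner x (H *v x) \<noteq> 0"
begin

abbreviation Q :: "complex^'n^'n" where
  "Q \<equiv> mat 1 - oproj x H"

lemma Q_mult_vector: "Q *v v = v - (cinner x (H *v v) / cinner x (H *v x)) *s x"
  by (simp add: matrix_vector_mult_diff_rdistrib oproj_mult_vector)

lemma Q_x: "Q *v x = 0"
  using xHx_nz by (simp add: Q_mult_vector)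

lemma cinner_x_H_Q: "cinner x (H *v (Q *v v)) = 0"
  using xHx_nz
  by (simp add: Q_mult_vector matrix_vector_mult_diff_distrib matrix_vector_mult_scale
      cinner_diff_right cinner_scale_right)

lemma cinner_Q_H_x: "cinner (Q *v v) (H *v x) = 0"
  using cinner_x_H_Q[of v] hermitian_cnj_cinner_swap[OF hermitian_H, of x "Q *v v"] by simp

lemma Q_idem: "Q *v (Q *v v) = Q *v v"
  by (subst (1) Q_mult_vector) (simp add: cinner_x_H_Q)

lemma cinner_Q_left: "cinner x w = 0 \<Longrightarrow> cinner (Q *v v) w = cinner v w"
  by (simp add: Q_mult_vector cinner_diff_left cinner_scale_left)

lemma ctrans_Q_mult_vector: "ctrans Q *v w = w - (cinner x w / cinner x (H *v x)) *s (H *v x)"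
proof -
  have "cinner u (ctrans Q *v w) = cinner u (w - (cinner x w / cinner x (H *v x)) *s (H *v x))" for u
  proof -
    have "cnj (cinner x (H *v u) / cinner x (H *v x)) = cinner u (H *v x) / cinner x (H *v x)"
      using hermitian_cinner_self_real[OF hermitian_H, of x]
      by (simp add: hermitian_cnj_cinner_swap[OF hermitian_H])
    then show ?thesis
      by (simp add: cinner_mult_left[symmetric] Q_mult_vector cinner_diff_left cinner_diff_right
          cinner_scale_left cinner_scale_right)
  qed
  then show ?thesis
    by (simp add: vec_eq_iff_cinner)
qed

end

section \<open>The projected update\<close>

lemma complex_eq_0_if_Re_rotations: "Re z = 0 \<Longrightarrow> Re (cnj \<i> * z) = 0 \<Longrightarrow> z = 0"
  by (simp add: complex_eq_iff)

text \<open>\<open>Fx\<close>, \<open>F0\<close>, \<open>H\<close> and \<open>\<delta>\<close> stand for \<open>F(\<rho>(x))\<close>, \<open>F(\<rho>(x\<^sub>o\<^sub>p\<^sub>t))\<close>,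
  \<open>\<Phi>(\<rho>(x\<^sub>o\<^sub>p\<^sub>t), \<rho>(x))\<close> and \<open>\<rho>(x\<^sub>o\<^sub>p\<^sub>t) - \<rho>(x)\<close>; the Rayleigh functional enters only through
  the two root conditions and the vanishing derivative in the directions of the search space.\<close>

locale projected_update = oblique_projection x H
  for x :: "complex^'n" and H +
  fixes Fx F0 :: "complex^'n^'n" and \<delta> :: real
    and p s d xopt :: "complex^'n" and S :: "complex^'k^'n" and \<alpha> :: complex and b :: "complex^'k"
  assumes hermitian_F0: "hermitian F0"
    and F0_eq: "F0 = Fx + \<delta> *\<^sub>R H"
    and s_eq: "s = p + S *v b"
    and d_eq: "d = \<alpha> *s (Q *v s)"
    and xopt_eq: "xopt = x + d"
    and x_orth_r: "cinner x (Fx *v x) = 0"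
    and xopt_orth_ropt: "cinner xopt (F0 *v xopt) = 0"
    and S_orth_r: "ctrans S *v (Fx *v x) = 0"
    and p_r_nz: "cinner p (Fx *v x) \<noteq> 0"
    and stationary: "\<And>c w. Re (cinner (c *s (Q *v s) + \<alpha> *s (Q *v (S *v w))) (F0 *v xopt)) = 0"
begin

abbreviation r :: "complex^'n" where
  "r \<equiv> Fx *v x"

abbreviation ropt :: "complex^'n" where
  "ropt \<equiv> F0 *v xopt"

abbreviation Fc :: "complex^'n^'n" where
  "Fc \<equiv> ctrans Q ** F0 ** Q"

abbreviation xHx :: complex where
  "xHx \<equiv> cinner x (H *v x)"

lemma F0_mult_vector: "F0 *v v = Fx *v v + \<delta> *\<^sub>R (H *v v)"
  by (simp add: F0_eq matrix_vector_mult_add_rdistrib scaleR_matrix_vector_mult)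

lemma xHx_real: "cnj xHx = xHx"
  by (rule hermitian_cinner_self_real[OF hermitian_H])

lemma s_r_eq_p_r: "cinner s r = cinner p r"
  by (simp add: s_eq cinner_add_left cinner_mult_left S_orth_r)

lemma Q_s_orth_ropt: "cinner (Q *v s) ropt = 0"
  using stationary[of 1 0] stationary[of \<i> 0]
  by (intro complex_eq_0_if_Re_rotations) (simp_all add: cinner_scale_left)

lemma d_orth_ropt: "cinner d ropt = 0"
  by (simp add: d_eq cinner_scale_left Q_s_orth_ropt)

lemma x_orth_ropt: "cinner x ropt = 0"
  using xopt_orth_ropt d_orth_ropt by (simp add: xopt_eq cinner_add_left)

lemma s_orth_ropt: "cinner s ropt = 0"
  using Q_s_orth_ropt by (simp add: cinner_Q_left[OF x_orth_ropt])

lemma alpha_nz: "\<alpha> \<noteq> 0"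
proof
  assume "\<alpha> = 0"
  then have "xopt = x"
    by (simp add: xopt_eq d_eq)
  then have "\<delta> * xHx = 0"
    using xopt_orth_ropt x_orth_r by (simp add: F0_mult_vector cinner_add_right cinner_scaleR_right)
  then have "ropt = r"
    using xHx_nz \<open>xopt = x\<close> by (simp add: F0_eq)
  then have "cinner p r = 0"
    using Q_s_orth_ropt s_r_eq_p_r by (simp add: cinner_Q_left[OF x_orth_r])
  with p_r_nz show False ..
qed

lemma S_orth_ropt: "cinner (S *v w) ropt = 0"
proof -
  have "cnj \<alpha> * cinner (Q *v (S *v w)) ropt = 0"
    using stationary[of 0 w] stationary[of 0 "\<i> *s w"]
    by (intro complex_eq_0_if_Re_rotations)
      (simp_all add: cinner_scale_left matrix_vector_mult_scale vector_smult_assoc mult_ac)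
  then show ?thesis
    using alpha_nz by (simp add: cinner_Q_left[OF x_orth_ropt])
qed

lemma orth_search_space:
  assumes "cinner x z = 0" "cinner p z = 0" "\<And>w. cinner (S *v w) z = 0"
  shows "\<forall>y \<in> vec.span ({x, p, s, d} \<union> range (\<lambda>j. column j S)). cinner y z = 0"
proof
  have s_z: "cinner s z = 0"
    using assms by (simp add: s_eq cinner_add_left)
  then have "cinner d z = 0"
    by (simp add: d_eq cinner_scale_left cinner_Q_left[OF assms(1)])
  fix y
  assume "y \<in> vec.span ({x, p, s, d} \<union> range (\<lambda>j. column j S))"
  then show "cinner y z = 0"
    by (rule cinner_span_eq_0) (use assms s_z \<open>cinner d z = 0\<close> in \<open>auto simp: column_eq_mult_axis\<close>)
qed

lemma ropt_orth_search_space: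
  "\<forall>y \<in> vec.span ({x, p, s, d} \<union> range (\<lambda>j. column j S)). cinner y ropt = 0"
proof (rule orth_search_space[OF x_orth_ropt _ S_orth_ropt])
  have "p = s - S *v b"
    by (simp add: s_eq)
  then show "cinner p ropt = 0"
    by (simp add: cinner_diff_left s_orth_ropt S_orth_ropt)
qed

lemma x_F0_d: "cinner x (F0 *v d) = - (\<delta> * xHx)"
  using x_orth_ropt x_orth_r
  by (simp add: xopt_eq matrix_vector_right_distrib F0_mult_vector cinner_add_right
      cinner_scaleR_right add_eq_0_iff)

lemma Q_d: "Q *v d = d"
  by (simp add: d_eq matrix_vector_mult_scale Q_idem)

lemma residual_update: "ropt - r = Fc *v d"
proof -
  have "Fc *v d = F0 *v d - (cinner x (F0 *v d) / xHx) *s (H *v x)"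
    by (simp add: Q_d ctrans_Q_mult_vector flip: matrix_vector_mul_assoc)
  also have "\<dots> = F0 *v d + \<delta> *\<^sub>R (H *v x)"
    using xHx_nz by (simp add: x_F0_d scaleR_eq_scale)
  also have "\<dots> = ropt - r"
    by (simp add: xopt_eq matrix_vector_right_distrib F0_mult_vector)
  finally show ?thesis
    by simp
qed

lemma d_F0_d: "cinner d (F0 *v d) = \<delta> * xHx"
proof -
  have "cinner d (F0 *v x) = cnj (cinner x (F0 *v d))"
    by (simp add: hermitian_cnj_cinner_swap[OF hermitian_F0])
  also have "\<dots> = - (\<delta> * xHx)"
    by (simp add: x_F0_d xHx_real)
  finally show ?thesis
    using d_orth_ropt by (simp add: xopt_eq matrix_vector_right_distrib cinner_add_right add_eq_0_iff)
qed

lemma d_F0_d_alpha: "cinner d (F0 *v d) = - (cnj \<alpha> * cinner p r)"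
proof -
  have "cinner d (F0 *v x) = cnj \<alpha> * cinner p r"
    using s_r_eq_p_r
    by (simp add: F0_mult_vector cinner_add_right cinner_scaleR_right d_eq cinner_scale_left
        cinner_Q_H_x cinner_Q_left[OF x_orth_r])
  then show ?thesis
    using d_orth_ropt by (simp add: xopt_eq matrix_vector_right_distrib cinner_add_right add_eq_0_iff)
qed

lemma hermitian_Fc: "hermitian Fc"
  by (rule hermitian_congruence[OF hermitian_F0])

lemma Fc_Q_right: "Fc *v (Q *v v) = Fc *v v"
  by (simp add: Q_idem flip: matrix_vector_mul_assoc)

lemma cinner_x_Fc: "cinner x (Fc *v v) = 0"
  by (simp add: cinner_mult_right[of x "ctrans Q"] Q_x flip: matrix_vector_mul_assoc)

lemma Fc_d: "Fc *v d = \<alpha> *s (Fc *v s)"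
  by (simp add: d_eq matrix_vector_mult_scale Fc_Q_right)

lemma alpha_s_Fc_s: "\<alpha> * cinner s (Fc *v s) = - cinner p r"
proof -
  have "cinner s (ropt - r) = \<alpha> * cinner s (Fc *v s)"
    by (simp add: residual_update Fc_d cinner_scale_right)
  then show ?thesis
    using s_orth_ropt s_r_eq_p_r by (simp add: cinner_diff_right)
qed

lemma s_Fc_s_real: "cnj (cinner s (Fc *v s)) = cinner s (Fc *v s)"
  by (rule hermitian_cinner_self_real[OF hermitian_Fc])

lemma alpha_eq: "\<alpha> = - cinner p r / cinner s (Fc *v s)"
proof -
  have "cinner s (Fc *v s) \<noteq> 0"
    using alpha_s_Fc_s p_r_nz by auto
  then show ?thesis
    using alpha_s_Fc_s by (simp add: field_simps)
qed

lemma d_F0_d_eq: "cinner d (F0 *v d) = cinner r p * cinner p r / cinner s (Fc *v s)"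
proof -
  have "cnj \<alpha> = - cinner r p / cinner s (Fc *v s)"
    using arg_cong[OF alpha_eq, of cnj] s_Fc_s_real by (simp add: cnj_cinner)
  then show ?thesis
    by (simp add: d_F0_d_alpha)
qed

lemma alpha_eq': "\<alpha> = - cinner d (F0 *v d) / cinner r p"
proof -
  have "cinner r p \<noteq> 0"
    using p_r_nz cnj_cinner[of r p] by auto
  then show ?thesis
    by (simp add: d_F0_d_eq alpha_eq)
qed

lemma delta_eq': "complex_of_real \<delta> = cinner d (F0 *v d) / xHx"
  using xHx_nz by (simp add: d_F0_d)

lemma delta_eq:
  "complex_of_real \<delta> = complex_of_real ((cmod (cinner r p))\<^sup>2) / (xHx * cinner s (Fc *v s))"
proof -
  have "cinner r p * cinner p r = complex_of_real ((cmod (cinner r p))\<^sup>2)"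
    using complex_norm_square[of "cinner r p"] by (simp add: cnj_cinner)
  then show ?thesis
    by (simp add: delta_eq' d_F0_d_eq)
qed

lemma S_Fc_s: "ctrans S *v (Fc *v s) = 0"
proof -
  have "cinner (S *v w) r = 0" for w
    by (simp add: cinner_mult_left S_orth_r)
  then have "\<alpha> * cinner (S *v w) (Fc *v s) = 0" for w
    using S_orth_ropt[of w]
    by (simp add: Fc_d[symmetric] residual_update[symmetric] cinner_diff_right flip: cinner_scale_right)
  then show ?thesis
    using alpha_nz by (simp add: vec_eq_iff_cinner cinner_mult_left[symmetric])
qed

lemma b_decomposition:
  "\<exists>v. (\<forall>y \<in> vec.span ({x, p, s, d} \<union> range (\<lambda>j. column j S)). cinner y (Fc *v (S *v v)) = 0)
       \<and> b = - (pinv (ctrans S ** Fc ** S) *v (ctrans S *v (Fc *v p))) + v"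
proof -
  define M where "M = ctrans S ** Fc ** S"
  define g where "g = ctrans S *v (Fc *v p)"
  have M: "hermitian M"
    unfolding M_def by (rule hermitian_congruence[OF hermitian_Fc])
  have M_mult_vector: "M *v v = ctrans S *v (Fc *v (S *v v))" for v
    by (simp add: M_def flip: matrix_vector_mul_assoc)
  have Mb: "M *v b = - g"
    using S_Fc_s by (simp add: M_mult_vector g_def s_eq matrix_vector_right_distrib add_eq_0_iff)
  define v where "v = b + pinv M *v g"
  have Mv: "M *v v = 0"
    using hermitian_pinv_kernel[OF M, of b]
    by (simp add: v_def Mb matrix_vector_mult_minus_right matrix_vector_mult_diff_distrib
        matrix_vector_right_distrib)
  have S_orth: "cinner (S *v w) (Fc *v (S *v v)) = 0" for w
    by (simp add: cinner_mult_left M_mult_vector[symmetric] Mv)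
  have "cinner p (Fc *v (S *v v)) = cnj (cinner (S *v v) (Fc *v p))"
    by (rule hermitian_cnj_cinner_swap[OF hermitian_Fc, symmetric])
  also have "cinner (S *v v) (Fc *v p) = - cinner v (M *v b)"
    by (simp add: cinner_mult_left Mb g_def cinner_minus_right)
  also have "\<dots> = 0"
    by (simp add: hermitian_cinner_swap[OF M] Mv)
  finally have p_orth: "cinner p (Fc *v (S *v v)) = 0"
    by simp
  have "b = - (pinv M *v g) + v"
    by (simp add: v_def)
  with orth_search_space[OF cinner_x_Fc p_orth S_orth] show ?thesis
    unfolding M_def g_def by (intro exI[of _ v] conjI)
qed

end

theorem theorem2p2:
  fixes A :: "nat \<Rightarrow> complex^'n^'n" and m :: nat and lm :: real and lp :: ereal
    and x p s d xopt :: "complex^'n" and S :: "complex^'k^'n"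
    and aopt :: complex and bopt :: "complex^'k"
  assumes herm: "\<And>j. j \<le> m \<Longrightarrow> hermitian (A j)"
    and interval: "ereal lm < lp"
    and negdef: "\<And>y. y \<noteq> 0 \<Longrightarrow> Re (cinner y (Fpoly A m lm *v y)) < 0"
    and x_nz: "x \<noteq> 0" and x_adm: "admissible A m lm lp x"
    and r_nz: "resid A m lm lp x \<noteq> 0"
    and p_nz: "p \<noteq> 0"
    and pr_nz: "cinner p (resid A m lm lp x) \<noteq> 0"
    and Sr: "ctrans S *v resid A m lm lp x = 0"
    and fullrank: "\<And>a c (w :: complex^'k). a *s x + c *s p + S *v w = 0 \<Longrightarrow> a = 0 \<and> c = 0 \<and> w = 0"
    and s_def: "s = p + S *v bopt"
    and d_def: "d = aopt *s ((mat 1 - Pproj A m x (rho A m lm lp xopt) (rho A m lm lp x)) *v s)"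
    and xopt_def: "xopt = x + d"
    and adm_nbhd: "\<forall>\<^sub>F (a, b) in nhds (aopt, bopt).
        admissible A m lm lp
          (x + a *s ((mat 1 - Pproj A m x (rho A m lm lp xopt) (rho A m lm lp x)) *v (p + S *v b)))"
    and stationary: "((\<lambda>(a, b). rho A m lm lp
          (x + a *s ((mat 1 - Pproj A m x (rho A m lm lp xopt) (rho A m lm lp x)) *v (p + S *v b))))
        has_derivative (\<lambda>_. 0)) (at (aopt, bopt))"
    and xPhix_nz: "cinner x (Phi A m (rho A m lm lp xopt) (rho A m lm lp x) *v x) \<noteq> 0"
    and sFs_nz: "cinner s (Fcheck A m (rho A m lm lp xopt) (rho A m lm lp x) (rho A m lm lp xopt) x *v s) \<noteq> 0"
  shows
    "(xopt \<noteq> x \<longrightarrow>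
        aopt \<noteq> 0 \<and>
        (\<forall>y \<in> vec.span ({x, p, s, d} \<union> range (\<lambda>j. column j S)).
            cinner y (resid A m lm lp xopt) = 0)) \<and>
     (let r = resid A m lm lp x; ropt = resid A m lm lp xopt;
          rx = rho A m lm lp x; ro = rho A m lm lp xopt;
          Fc = Fcheck A m ro rx ro x;
          xPx = cinner x (Phi A m ro rx *v x);
          sFs = cinner s (Fc *v s);
          dFd = cinner d (Fpoly A m ro *v d)
      in aopt = - cinner p r / sFs \<and>
         aopt = - dFd / cinner r p \<and>
         complex_of_real (ro - rx) = complex_of_real ((cmod (cinner r p))\<^sup>2) / (xPx * sFs) \<and>
         complex_of_real (ro - rx) = dFd / xPx \<and>
         ropt - r = Fc *v d \<and>
         (\<exists>v. (\<forall>y \<in> vec.span ({x, p, s, d} \<union> range (\<lambda>j. column j S)).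
                 cinner y (Fc *v (S *v v)) = 0) \<and>
              bopt = - (pinv (ctrans S ** Fc ** S) *v (ctrans S *v (Fc *v p))) + v))"
proof -
  define rx ro where "rx = rho A m lm lp x" and "ro = rho A m lm lp xopt"
  note \<rho>_defs = rx_def[symmetric] ro_def[symmetric]
  have d_eq: "d = aopt *s ((mat 1 - oproj x (Phi A m ro rx)) *v s)"
    using d_def by (simp add: \<rho>_defs Pproj_eq_oproj)
  have xopt_eq: "x + aopt *s ((mat 1 - oproj x (Phi A m ro rx)) *v s) = xopt"
    using xopt_def d_eq by simp
  have "admissible A m lm lp xopt"
    using eventually_nhds_x_imp_x[OF adm_nbhd]
    by (simp add: \<rho>_defs Pproj_eq_oproj xopt_eq flip: s_def)
  interpret projected_update x "Phi A m ro rx" "Fpoly A m rx" "Fpoly A m ro" "ro - rx"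
    p s d xopt S aopt bopt
  proof
    show "hermitian (Phi A m ro rx)" "hermitian (Fpoly A m ro)"
      using herm by (simp_all add: hermitian_Phi hermitian_Fpoly)
    show "cinner x (Phi A m ro rx *v x) \<noteq> 0"
      using xPhix_nz by (simp add: \<rho>_defs)
    show "Fpoly A m ro = Fpoly A m rx + (ro - rx) *\<^sub>R Phi A m ro rx"
      by (rule Fpoly_divided_difference)
    show "cinner x (Fpoly A m rx *v x) = 0" "cinner xopt (Fpoly A m ro *v xopt) = 0"
      using resid_orth_self[OF herm x_adm] resid_orth_self[OF herm \<open>admissible A m lm lp xopt\<close>]
      by (simp_all add: resid_def \<rho>_defs)
    show "ctrans S *v (Fpoly A m rx *v x) = 0" "cinner p (Fpoly A m rx *v x) \<noteq> 0"
      using Sr pr_nz by (simp_all add: resid_def \<rho>_defs)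
    show "Re (cinner (c *s ((mat 1 - oproj x (Phi A m ro rx)) *v s)
        + aopt *s ((mat 1 - oproj x (Phi A m ro rx)) *v (S *v w))) (Fpoly A m ro *v xopt)) = 0" for c w
      using resid_orth_directions_of_stationary_point[where A = A and m = m, OF herm adm_nbhd stationary]
      by (simp add: \<rho>_defs Pproj_eq_oproj xopt_eq resid_def flip: s_def)
  qed (fact s_def d_eq xopt_def)+
  show ?thesis
    unfolding Let_def resid_def Fcheck_eq_oproj \<rho>_defs
    using alpha_nz ropt_orth_search_space alpha_eq alpha_eq' delta_eq delta_eq' residual_update
      b_decomposition
    by simp
qed

end
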